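(* Suppose Assumption A holds and $F$ is $K$-convex. Let $\{x^k\}$ be an infinite sequence generated by Algorithm 1 with $G_k\in\mathcal{S}_{\ell,\mu}(F,x^k)$ for all $k$, where $\ell\preceq_K\mu$. Then: (i) $\{x^k\}$ converges to a weakly efficient solution $x^*$ of $\min_K F(x)$; (ii) $u_0(x^k)\le\frac{\ell_{\max}R^2}{2k}$ for all $k\ge1$, where $\ell_{\max}:=\max_{c^*\in C}\langle c^*,\ell\rangle$, $R:=\sup\{\|x-y\|:x,y\in\mathcal{L}_F(x^0)\}$, and $u_0(x):=\max_{z\in\mathbb{R}^n}\min_{c^*\in C}\langle c^*,F(x)-F(z)\rangle$.
   Context: $K\subset\mathbb{R}^m$ is a closed, convex, pointed cone with nonempty interior; $y\preceq_K y'$ iff $y'-y\in K$, $y\prec_K y'$ iff $y'-y\in\mathrm{int}(K)$. $K^*=\{c:\langle c,y\rangle\ge0\ \forall y\in K\}$; $C$ is a compact convex set with $0\notin C$, $\mathrm{cone}(C)=K^*$. $F:\mathbb{R}^n\to\mathbb{R}^m$ differentiable with Jacobian $JF$. $K$-convex: $JF(x)(y-x)\preceq_K F(y)-F(x)$ for all $x,y$. $x^*$ is weakly efficient if there is no $x$ with $F(x)\prec_K F(x^* )$; $K$-stationary if $\mathrm{range}(JF(x^* ))\cap(-\mathrm{int}(K))=\emptyset$. For differentiable $\Phi$: strongly $K$-convex with $\mu\in K$ means $J\Phi(x)(y-x)+\tfrac12\|y-x\|^2\mu\preceq_K\Phi(y)-\Phi(x)$ $\forall x,y$; $K$-smooth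 with $\ell\in K$ means $\Phi(y)-\Phi(x)\preceq_K J\Phi(x)(y-x)+\tfrac12\|y-x\|^2\ell$ $\forall x,y$. Surrogate class $\mathcal{S}_{\ell,\mu}(F,x^k)$ ($\ell\in K,\mu\in\mathrm{int}(K)$): differentiable $G_k$ strongly $K$-convex with $\mu$ such that, with $x^{k+1}$ the minimizer of $x\mapsto\max_{c^*\in C}\langle c^*,G_k(x)\rangle$ and $H_k:=G_k-F+F(x^k)$: $F(x^{k+1})-F(x^k)\preceq_K G_k(x^{k+1})$; $H_k$ is $K$-smooth with $\ell$, $H_k(x^k)=0$, $JH_k(x^k)=0$. Algorithm 1: from $x^0$, choose $G_k\in\mathcal{S}_{\ell,\mu}(F,x^k)$, set $x^{k+1}:=\arg\min_x\max_{c^*\in C}\langle c^*,G_k(x)\rangle$, stop if $x^{k+1}=x^k$. Assumption A: (i) $\mathcal{L}_F(x^0)=\{x:F(x)\preceq_K F(x^0)\}$ is bounded; (ii) whenever $x^k\to x^*$ along an infinite index set $\mathcal{K}$, $G_k\in\mathcal{S}_{\ell,\mu}(F,x^k)$ and $\max_{c^*\in C}\langle c^*,G_k(x^{k+1})\rangle\to0$ along $\mathcal{K}$, $x^*$ is $K$-stationary. *)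

theory Defs
  imports "HOL-Analysis.Analysis"
begin

definition cle :: "'b::euclidean_space set \<Rightarrow> 'b \<Rightarrow> 'b \<Rightarrow> bool" where
  "cle K y y' \<longleftrightarrow> y' - y \<in> K"

definition clt :: "'b::euclidean_space set \<Rightarrow> 'b \<Rightarrow> 'b \<Rightarrow> bool" where
  "clt K y y' \<longleftrightarrow> y' - y \<in> interior K"

definition dual_cone :: "'b::euclidean_space set \<Rightarrow> 'b set" where
  "dual_cone K = {c. \<forall>y\<in>K. 0 \<le> c \<bullet> y}"

definition pointed_cone_ok :: "'b::euclidean_space set \<Rightarrow> bool" where
  "pointed_cone_ok K \<longleftrightarrow> closed K \<and> convex K \<and> cone K \<and> K \<inter> uminus ` K = {0}
     \<and> interior K \<noteq> {}"

definition scal_set_ok :: "'b::euclidean_space set \<Rightarrow> 'b set \<Rightarrow> bool" where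
  "scal_set_ok K C \<longleftrightarrow> compact C \<and> convex C \<and> 0 \<notin> C \<and> cone hull C = dual_cone K"

definition scal :: "'b::euclidean_space set \<Rightarrow> 'b \<Rightarrow> real" where
  "scal C v = (SUP c\<in>C. c \<bullet> v)"

abbreviation J :: "('a::euclidean_space \<Rightarrow> 'b::euclidean_space) \<Rightarrow> 'a \<Rightarrow> 'a \<Rightarrow> 'b" where
  "J F x \<equiv> frechet_derivative F (at x)"

definition K_convex :: "'b::euclidean_space set \<Rightarrow> ('a::euclidean_space \<Rightarrow> 'b) \<Rightarrow> bool" where
  "K_convex K F \<longleftrightarrow> (\<forall>x y. cle K (J F x (y - x)) (F y - F x))"

definition weakly_efficient :: "'b::euclidean_space set \<Rightarrow> ('a::euclidean_space \<Rightarrow> 'b) \<Rightarrow> 'a \<Rightarrow> bool" where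
  "weakly_efficient K F xs \<longleftrightarrow> \<not> (\<exists>x. clt K (F x) (F xs))"

definition K_stationary :: "'b::euclidean_space set \<Rightarrow> ('a::euclidean_space \<Rightarrow> 'b) \<Rightarrow> 'a \<Rightarrow> bool" where
  "K_stationary K F xs \<longleftrightarrow> range (J F xs) \<inter> uminus ` interior K = {}"

definition strongly_K_convex :: "'b::euclidean_space set \<Rightarrow> ('a::euclidean_space \<Rightarrow> 'b) \<Rightarrow> 'b \<Rightarrow> bool" where
  "strongly_K_convex K \<Phi> \<mu> \<longleftrightarrow>
     (\<forall>x y. cle K (J \<Phi> x (y - x) + ((1/2) * (norm (y - x))\<^sup>2) *\<^sub>R \<mu>) (\<Phi> y - \<Phi> x))"

definition K_smooth :: "'b::euclidean_space set \<Rightarrow> ('a::euclidean_space \<Rightarrow> 'b) \<Rightarrow> 'b \<Rightarrow> bool" where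
  "K_smooth K \<Phi> l \<longleftrightarrow>
     (\<forall>x y. cle K (\<Phi> y - \<Phi> x) (J \<Phi> x (y - x) + ((1/2) * (norm (y - x))\<^sup>2) *\<^sub>R l))"

definition is_minimizer :: "('a \<Rightarrow> real) \<Rightarrow> 'a \<Rightarrow> bool" where
  "is_minimizer f z \<longleftrightarrow> (\<forall>w. f z \<le> f w)"

text \<open>Surrogate class S_{l,mu}(F, xk). The condition on x^{k+1} is imposed on
  the (unique, by strong convexity) minimizer of the scalarized surrogate.\<close>
definition surrogate ::
  "'b::euclidean_space set \<Rightarrow> 'b set \<Rightarrow> 'b \<Rightarrow> 'b \<Rightarrow> ('a::euclidean_space \<Rightarrow> 'b) \<Rightarrow> 'a
     \<Rightarrow> ('a \<Rightarrow> 'b) set" where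
  "surrogate K C l \<mu> F xk = {G.
     (\<forall>x. G differentiable at x) \<and> strongly_K_convex K G \<mu> \<and>
     (\<forall>z. is_minimizer (\<lambda>x. scal C (G x)) z \<longrightarrow> cle K (F z - F xk) (G z)) \<and>
     K_smooth K (\<lambda>x. G x - F x + F xk) l \<and>
     (G xk - F xk + F xk = 0) \<and>
     J (\<lambda>x. G x - F x + F xk) xk = (\<lambda>_. 0)}"

definition level_set :: "'b::euclidean_space set \<Rightarrow> ('a \<Rightarrow> 'b) \<Rightarrow> 'a \<Rightarrow> 'a set" where
  "level_set K F x0 = {x. cle K (F x) (F x0)}"

definition u0 :: "'b::euclidean_space set \<Rightarrow> ('a \<Rightarrow> 'b) \<Rightarrow> 'a \<Rightarrow> real" where
  "u0 C F x = (SUP z. INF c\<in>C. c \<bullet> (F x - F z))"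

end

theory Submission
  imports Defs
begin

text \<open>Scalarizing with the compact base \<open>C\<close> of the dual cone, every step satisfies a three-point
  inequality: for each \<open>z\<close> some \<open>c* \<in> C\<close> gives
  \<open>\<langle>c*, F(x\<^sup>k\<^sup>+\<^sup>1) - F(z)\<rangle> + \<langle>c*, \<mu>\<rangle> \<parallel>z - x\<^sup>k\<^sup>+\<^sup>1\<parallel>\<^sup>2/2 \<le> \<langle>c*, \<ell>\<rangle> \<parallel>z - x\<^sup>k\<parallel>\<^sup>2/2\<close>,
  from strong \<open>K\<close>-convexity of \<open>G\<^sub>k\<close> at the scalarized minimizer and \<open>K\<close>-smoothness of
  \<open>G\<^sub>k - F\<close> at \<open>x\<^sup>k\<close>. Since \<open>\<ell> \<preceq>\<^sub>K \<mu>\<close>, the iterates are Fejer monotone with respect to every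
  \<open>z\<close> with \<open>F(z) \<preceq>\<^sub>K F(x\<^sup>k)\<close>, in particular with respect to any cluster point of the
  (bounded) sequence, which is therefore its limit; Assumption A(ii) makes the limit
  \<open>K\<close>-stationary and \<open>K\<close>-convexity makes it weakly efficient. Summing the three-point inequality
  over the first \<open>k\<close> steps telescopes to the \<open>O(1/k)\<close> bound on \<open>u\<^sub>0\<close>.\<close>

lemma le_if_le_add_small_multiples:
  fixes A B Q :: real
  assumes "\<And>t. 0 < t \<Longrightarrow> t < 1 \<Longrightarrow> A \<le> B + t * Q"
  shows "A \<le> B"
proof (rule tendsto_lowerbound)
  have "((\<lambda>t. B + t * Q) \<longlongrightarrow> B + 0 * Q) (at_right 0)"
    by (intro tendsto_intros)
  then show "((\<lambda>t. B + t * Q) \<longlongrightarrow> B) (at_right 0)"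
    by simp
  show "\<forall>\<^sub>F t in at_right 0. A \<le> B + t * Q"
    using eventually_at_right_real[of 0 1] by (rule eventually_mono) (use assms in auto)
qed simp

lemma Fejer_monotone_convergent:
  fixes x :: "nat \<Rightarrow> 'a::metric_space"
  assumes Fejer: "\<And>k. dist (x (Suc k)) a \<le> dist (x k) a"
    and r: "strict_mono r" and sub: "(x \<circ> r) \<longlonglongrightarrow> a"
  shows "x \<longlonglongrightarrow> a"
proof -
  define d where "d k = dist (x k) a" for k
  have "decseq d"
    using Fejer by (simp add: decseq_SucI d_def)
  then obtain L where L: "d \<longlonglongrightarrow> L"
    using decseq_convergent[of d 0] by (auto simp: d_def)
  have "(d \<circ> r) \<longlonglongrightarrow> 0"
    using sub tendsto_dist_iff[of "x \<circ> r"] by (simp add: d_def comp_def)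
  then have "L = 0"
    using LIMSEQ_unique[OF LIMSEQ_subseq_LIMSEQ[OF L r]] by simp
  then show ?thesis
    using L tendsto_dist_iff[of x a] by (simp add: d_def[abs_def])
qed

lemma norm_diff_le_Sup:
  fixes S :: "'a::real_normed_vector set"
  assumes "bounded S" "y \<in> S" "z \<in> S"
  shows "norm (y - z) \<le> Sup {norm (y - z) | y z. y \<in> S \<and> z \<in> S}"
  using assms diameter_bounded_bound[OF assms(1)]
  by (intro cSup_upper bdd_aboveI[where M = "diameter S"]) (auto simp: dist_norm)

lemma convex_cone_interior_add:
  fixes K :: "'a::real_normed_vector set"
  assumes K: "convex_cone K" and a: "a \<in> interior K" and b: "b \<in> K"
  shows "a + b \<in> interior K"
proof -
  have "(+) b ` interior K \<subseteq> K"
    using interior_subset b convex_cone_add[OF K] by blast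
  then have "(+) b ` interior K \<subseteq> interior K"
    using open_translation[OF open_interior, of b K] by (simp add: interior_maximal)
  then show ?thesis
    using a by (auto simp: add.commute)
qed

lemma K_stationary_imp_weakly_efficient:
  assumes K: "convex_cone K" and F: "K_convex K F" and stat: "K_stationary K F xs"
  shows "weakly_efficient K F xs"
  unfolding weakly_efficient_def
proof
  assume "\<exists>y. clt K (F y) (F xs)"
  then obtain y where y: "F xs - F y \<in> interior K"
    unfolding clt_def by blast
  have "F y - F xs - J F xs (y - xs) \<in> K"
    using F unfolding K_convex_def cle_def by blast
  from convex_cone_interior_add[OF K y this] have "- J F xs (y - xs) \<in> interior K"
    by simp
  then have "J F xs (y - xs) \<in> range (J F xs) \<inter> uminus ` interior K"
    by (metis IntI minus_minus rangeI rev_image_eqI)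
  with stat show False
    unfolding K_stationary_def by blast
qed

lemma strongly_K_convex_combination:
  assumes K: "convex_cone K" and G: "strongly_K_convex K G \<mu>"
    and dG: "\<And>y. G differentiable at y" and t: "0 \<le> t" "t \<le> 1"
  shows "cle K (G (a + t *\<^sub>R (z - a)) + ((1/2) * (t * (1 - t)) * (norm (z - a))\<^sup>2) *\<^sub>R \<mu>)
               ((1 - t) *\<^sub>R G a + t *\<^sub>R G z)"
proof -
  define w where "w = a + t *\<^sub>R (z - a)"
  define D where "D = J G w"
  define d where "d = norm (z - a)"
  have D: "linear D"
    unfolding D_def using dG frechet_derivative_works has_derivative_linear by blast
  have aw: "a - w = (- t) *\<^sub>R (z - a)" and zw: "z - w = (1 - t) *\<^sub>R (z - a)"
    unfolding w_def by (simp_all add: algebra_simps)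
  have "(1 - t) *\<^sub>R D (a - w) + t *\<^sub>R D (z - w) = D ((1 - t) *\<^sub>R (a - w) + t *\<^sub>R (z - w))"
    using D by (simp add: linear_add linear_scale)
  also have "\<dots> = 0"
    using D unfolding aw zw by (simp add: algebra_simps linear_0)
  finally have lin: "(1 - t) *\<^sub>R D (a - w) + t *\<^sub>R D (z - w) = 0" .
  have na: "norm (a - w) = t * d" and nz: "norm (z - w) = (1 - t) * d"
    using t unfolding aw zw d_def by simp_all
  have quad: "(1 - t) * ((1/2) * (norm (a - w))\<^sup>2) + t * ((1/2) * (norm (z - w))\<^sup>2)
      = (1/2) * (t * (1 - t)) * d\<^sup>2"
    unfolding na nz by (simp add: power2_eq_square field_simps)
  define ea where "ea = G a - G w - (D (a - w) + ((1/2) * (norm (a - w))\<^sup>2) *\<^sub>R \<mu>)"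
  define ez where "ez = G z - G w - (D (z - w) + ((1/2) * (norm (z - w))\<^sup>2) *\<^sub>R \<mu>)"
  have "ea \<in> K" "ez \<in> K"
    using G unfolding strongly_K_convex_def cle_def D_def ea_def ez_def by blast+
  then have "(1 - t) *\<^sub>R ea + t *\<^sub>R ez \<in> K"
    using t by (intro convex_cone_add[OF K] convex_cone_scaleR[OF K]) simp_all
  also have "(1 - t) *\<^sub>R ea + t *\<^sub>R ez
      = (1 - t) *\<^sub>R G a + t *\<^sub>R G z - G w - ((1 - t) *\<^sub>R D (a - w) + t *\<^sub>R D (z - w))
        - ((1 - t) * ((1/2) * (norm (a - w))\<^sup>2) + t * ((1/2) * (norm (z - w))\<^sup>2)) *\<^sub>R \<mu>"
    unfolding ea_def ez_def by (simp add: algebra_simps)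
  also have "\<dots> = (1 - t) *\<^sub>R G a + t *\<^sub>R G z - (G w + ((1/2) * (t * (1 - t)) * d\<^sup>2) *\<^sub>R \<mu>)"
    unfolding lin quad by simp
  finally show ?thesis
    unfolding cle_def w_def d_def .
qed

locale scalarized_cone =
  fixes K C :: "'b::euclidean_space set"
  assumes K: "pointed_cone_ok K" and C: "scal_set_ok K C"
begin

lemma convex_cone_K: "convex_cone K"
proof -
  have "convex K" "cone K" "K \<noteq> {}"
    using K interior_subset unfolding pointed_cone_ok_def by blast+
  then show ?thesis
    unfolding convex_cone_def conic_def cone_def by blast
qed

lemma cle_refl: "cle K u u"
  unfolding cle_def using convex_cone_contains_0[OF convex_cone_K] by simp

lemma cle_trans: "cle K u v \<Longrightarrow> cle K v w \<Longrightarrow> cle K u w"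
  unfolding cle_def using convex_cone_add[OF convex_cone_K, of "w - v" "v - u"] by simp

lemma C_nonempty: "C \<noteq> {}"
proof
  assume "C = {}"
  then have "dual_cone K = {}"
    using C unfolding scal_set_ok_def by (simp add: hull_same)
  moreover have "0 \<in> dual_cone K"
    unfolding dual_cone_def by simp
  ultimately show False
    by simp
qed

lemma C_subset_dual_cone: "C \<subseteq> dual_cone K"
  using C unfolding scal_set_ok_def by (metis hull_subset)

lemma inner_nonneg: "c \<in> C \<Longrightarrow> v \<in> K \<Longrightarrow> 0 \<le> c \<bullet> v"
  using C_subset_dual_cone unfolding dual_cone_def by blast

lemma cle_inner: "c \<in> C \<Longrightarrow> cle K u v \<Longrightarrow> c \<bullet> u \<le> c \<bullet> v"
  using inner_nonneg[of c "v - u"] unfolding cle_def by (simp add: inner_diff_right)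

text \<open>Bipolar theorem: \<open>K\<close> is closed and convex, and \<open>C\<close> generates \<open>K*\<close>.\<close>
lemma mem_K_iff: "v \<in> K \<longleftrightarrow> (\<forall>c\<in>C. 0 \<le> c \<bullet> v)"
proof (intro iffI)
  assume v: "\<forall>c\<in>C. 0 \<le> c \<bullet> v"
  show "v \<in> K"
  proof (rule ccontr)
    assume "v \<notin> K"
    moreover have "convex K" "closed K"
      using K unfolding pointed_cone_ok_def by auto
    ultimately obtain a b where ab: "a \<bullet> v < b" "\<forall>y\<in>K. b < a \<bullet> y"
      using separating_hyperplane_closed_point by blast
    have b: "b < 0"
      using ab(2) convex_cone_contains_0[OF convex_cone_K] by force
    have "a \<in> dual_cone K"
      unfolding dual_cone_def
    proof (intro CollectI ballI)
      fix y assume y: "y \<in> K"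
      have "b < a \<bullet> (s *\<^sub>R y)" if "0 \<le> s" for s
        using ab(2) convex_cone_scaleR[OF convex_cone_K that y] by blast
      from this[of "b / (a \<bullet> y)"] b show "0 \<le> a \<bullet> y"
        by (cases "a \<bullet> y < 0") (auto simp: divide_nonpos_neg)
    qed
    then obtain s c where "a = s *\<^sub>R c" "0 \<le> s" "c \<in> C"
      using C unfolding scal_set_ok_def cone_hull_expl by blast
    then have "0 \<le> a \<bullet> v"
      using v by simp
    with ab(1) b show False
      by simp
  qed
qed (use inner_nonneg in blast)

lemma inner_interior_pos:
  assumes \<mu>: "\<mu> \<in> interior K" and c: "c \<in> C"
  shows "0 < c \<bullet> \<mu>"
proof -
  have c0: "c \<noteq> 0"
    using C c unfolding scal_set_ok_def by auto
  obtain e where e: "0 < e" "ball \<mu> e \<subseteq> K"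
    using \<mu> by (meson mem_interior)
  have "\<mu> - (e/2) *\<^sub>R (c /\<^sub>R norm c) \<in> K"
    using e c0 by (intro subsetD[OF e(2)]) (simp add: dist_norm)
  then have "0 \<le> c \<bullet> (\<mu> - (e/2) *\<^sub>R (c /\<^sub>R norm c))"
    using inner_nonneg[OF c] by blast
  also have "\<dots> = c \<bullet> \<mu> - (e/2) * norm c"
    using c0 by (simp add: inner_diff_right power2_norm_eq_inner[symmetric] power2_eq_square)
  finally have "(e/2) * norm c \<le> c \<bullet> \<mu>"
    by simp
  moreover have "0 < (e/2) * norm c"
    using e c0 by simp
  ultimately show ?thesis
    by linarith
qed

lemma bounded_inner_image: "bounded ((\<lambda>c. c \<bullet> v) ` C)"
  using C unfolding scal_set_ok_def
  by (intro compact_imp_bounded compact_continuous_image) (auto intro!: continuous_intros)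

lemma scal_upper: "c \<in> C \<Longrightarrow> c \<bullet> v \<le> scal C v"
  unfolding scal_def by (rule cSUP_upper) (auto intro: bounded_imp_bdd_above bounded_inner_image)

lemma scal_least: "(\<And>c. c \<in> C \<Longrightarrow> c \<bullet> v \<le> b) \<Longrightarrow> scal C v \<le> b"
  unfolding scal_def by (rule cSUP_least) (use C_nonempty in auto)

lemma scal_attained: "\<exists>c\<in>C. scal C v = c \<bullet> v"
proof -
  have "\<exists>c\<in>C. \<forall>d\<in>C. d \<bullet> v \<le> c \<bullet> v"
    using C C_nonempty unfolding scal_set_ok_def
    by (intro continuous_attains_sup) (auto intro!: continuous_intros)
  then obtain c where c: "c \<in> C" "\<forall>d\<in>C. d \<bullet> v \<le> c \<bullet> v"
    by blast
  then show ?thesis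
    by (meson order_antisym scal_least scal_upper)
qed

lemma scal_mono: "cle K u v \<Longrightarrow> scal C u \<le> scal C v"
  by (meson cle_inner order_trans scal_least scal_upper)

lemma scal_nonneg: "v \<in> K \<Longrightarrow> 0 \<le> scal C v"
  using C_nonempty inner_nonneg scal_upper by (meson all_not_in_conv order_trans)

lemma neg_mem_K_if_scal_nonpos: "scal C v \<le> 0 \<Longrightarrow> - v \<in> K"
  unfolding mem_K_iff by (metis inner_minus_right neg_0_le_iff_le order_trans scal_upper)

lemma scal_zero: "scal C 0 = 0"
  unfolding scal_def using C_nonempty by simp

lemma surrogate_value_nonpos:
  assumes G: "G \<in> surrogate K C l \<mu> F xk" and xn: "is_minimizer (\<lambda>z. scal C (G z)) xn"
  shows "scal C (G xn) \<le> 0"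
proof -
  have "G xk = 0"
    using G unfolding surrogate_def by simp
  then show ?thesis
    using xn scal_zero unfolding is_minimizer_def by metis
qed

lemma surrogate_descent:
  assumes G: "G \<in> surrogate K C l \<mu> F xk" and xn: "is_minimizer (\<lambda>z. scal C (G z)) xn"
  shows "cle K (F xn) (F xk)"
proof -
  have "cle K (F xn - F xk) (G xn)"
    using G xn unfolding surrogate_def by blast
  moreover have "cle K (G xn) 0"
    using neg_mem_K_if_scal_nonpos[OF surrogate_value_nonpos[OF G xn]] unfolding cle_def by simp
  ultimately have "cle K (F xn - F xk) 0"
    by (rule cle_trans)
  then show ?thesis
    unfolding cle_def by simp
qed

text \<open>The scalarized three-point inequality, still carrying the parameter \<open>t\<close> of the convex
  combination \<open>x\<^sub>n + t(z - x\<^sub>n)\<close> that tests the minimality of \<open>x\<^sub>n\<close>; the bounds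
  below are obtained by letting \<open>t \<rightarrow> 0\<close>.\<close>
lemma surrogate_three_point:
  assumes G: "G \<in> surrogate K C l \<mu> F xk" and xn: "is_minimizer (\<lambda>z. scal C (G z)) xn"
    and t: "0 < t" "t < 1"
  shows "\<exists>c\<in>C. c \<bullet> (F xn - F z) + (1/2) * (1 - t) * (c \<bullet> \<mu>) * (norm (z - xn))\<^sup>2
                \<le> (1/2) * (c \<bullet> l) * (norm (z - xk))\<^sup>2"
proof -
  have dG: "\<And>y. G differentiable at y" and sc: "strongly_K_convex K G \<mu>"
    and decrease: "cle K (F xn - F xk) (G xn)"
    and smooth: "K_smooth K (\<lambda>x. G x - F x + F xk) l"
    and H0: "G xk = 0"
    and JH: "J (\<lambda>x. G x - F x + F xk) xk = (\<lambda>_. 0)"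
    using G xn unfolding surrogate_def by auto
  define d where "d = norm (z - xn)"
  define V where "V = (1 - t) *\<^sub>R G xn + t *\<^sub>R G z - ((1/2) * (t * (1 - t)) * d\<^sup>2) *\<^sub>R \<mu>"
  obtain c where c: "c \<in> C" "scal C V = c \<bullet> V"
    using scal_attained by blast
  have "c \<bullet> G xn \<le> scal C (G xn)"
    using scal_upper[OF c(1)] .
  also have "\<dots> \<le> scal C (G (xn + t *\<^sub>R (z - xn)))"
    using xn unfolding is_minimizer_def by blast
  also have "\<dots> \<le> scal C V"
    using strongly_K_convex_combination[OF convex_cone_K sc dG, of t xn z] t
    unfolding V_def d_def cle_def by (intro scal_mono) (simp add: cle_def algebra_simps)
  also have "\<dots> = c \<bullet> V"
    by (rule c(2))
  finally have "c \<bullet> G xn \<le> (1 - t) * (c \<bullet> G xn) + t * (c \<bullet> G z) - (1/2) * (t * (1 - t)) * d\<^sup>2 * (c \<bullet> \<mu>)"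
    unfolding V_def by (simp add: inner_diff_right inner_add_right)
  then have "t * (c \<bullet> G xn + (1/2) * (1 - t) * (c \<bullet> \<mu>) * d\<^sup>2) \<le> t * (c \<bullet> G z)"
    by (simp add: algebra_simps)
  then have G_xn: "c \<bullet> G xn + (1/2) * (1 - t) * (c \<bullet> \<mu>) * d\<^sup>2 \<le> c \<bullet> G z"
    using t by simp
  have "cle K ((G z - F z + F xk) - (G xk - F xk + F xk))
      (J (\<lambda>x. G x - F x + F xk) xk (z - xk) + ((1/2) * (norm (z - xk))\<^sup>2) *\<^sub>R l)"
    using smooth unfolding K_smooth_def by blast
  then have "cle K (G z - F z + F xk) (((1/2) * (norm (z - xk))\<^sup>2) *\<^sub>R l)"
    unfolding JH H0 by simp
  from cle_inner[OF c(1) this]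
  have G_z: "c \<bullet> G z \<le> c \<bullet> (F z - F xk) + (1/2) * (c \<bullet> l) * (norm (z - xk))\<^sup>2"
    by (simp add: inner_diff_right inner_add_right field_simps)
  have "c \<bullet> (F xn - F xk) \<le> c \<bullet> G xn"
    using cle_inner[OF c(1) decrease] .
  with G_xn G_z c(1) show ?thesis
    unfolding d_def by (intro bexI[of _ c]) (simp_all add: inner_diff_right)
qed

lemma surrogate_Fejer:
  assumes G: "G \<in> surrogate K C l \<mu> F xk" and xn: "is_minimizer (\<lambda>z. scal C (G z)) xn"
    and \<mu>: "\<mu> \<in> interior K" and l: "cle K l \<mu>" and z: "cle K (F z) (F xn)"
  shows "norm (z - xn) \<le> norm (z - xk)"
proof -
  have "(norm (z - xn))\<^sup>2 \<le> (norm (z - xk))\<^sup>2 + t * (norm (z - xn))\<^sup>2"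
    if t: "0 < t" "t < 1" for t
  proof -
    obtain c where c: "c \<in> C" and three_point:
      "c \<bullet> (F xn - F z) + (1/2) * (1 - t) * (c \<bullet> \<mu>) * (norm (z - xn))\<^sup>2
         \<le> (1/2) * (c \<bullet> l) * (norm (z - xk))\<^sup>2"
      using surrogate_three_point[OF G xn t] by blast
    have "0 \<le> c \<bullet> (F xn - F z)"
      using cle_inner[OF c z] by (simp add: inner_diff_right)
    moreover have "c \<bullet> l * (norm (z - xk))\<^sup>2 \<le> c \<bullet> \<mu> * (norm (z - xk))\<^sup>2"
      using cle_inner[OF c l] by (simp add: mult_right_mono)
    ultimately have "c \<bullet> \<mu> * ((1 - t) * (norm (z - xn))\<^sup>2) \<le> c \<bullet> \<mu> * (norm (z - xk))\<^sup>2"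
      using three_point by (simp add: field_simps)
    then have "(1 - t) * (norm (z - xn))\<^sup>2 \<le> (norm (z - xk))\<^sup>2"
      using inner_interior_pos[OF \<mu> c] by simp
    then show ?thesis
      by (simp add: algebra_simps)
  qed
  then have "(norm (z - xn))\<^sup>2 \<le> (norm (z - xk))\<^sup>2"
    by (rule le_if_le_add_small_multiples)
  then show ?thesis
    by (rule power2_le_imp_le) simp
qed

lemma surrogate_gap_bound:
  assumes G: "G \<in> surrogate K C l \<mu> F xk" and xn: "is_minimizer (\<lambda>z. scal C (G z)) xn"
    and \<mu>: "\<mu> \<in> interior K" and l: "l \<in> K" "cle K l \<mu>" and z: "cle K (F z) (F xn)"
    and m: "\<And>c. c \<in> C \<Longrightarrow> m \<le> c \<bullet> (F xn - F z)"
  shows "m \<le> (1/2) * scal C l * ((norm (z - xk))\<^sup>2 - (norm (z - xn))\<^sup>2)"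
proof -
  define a where "a = (norm (z - xk))\<^sup>2"
  define b where "b = (norm (z - xn))\<^sup>2"
  have ba: "b \<le> a"
    using surrogate_Fejer[OF G xn \<mu> l(2) z] unfolding a_def b_def by (intro power_mono) simp_all
  have "m \<le> (1/2) * scal C l * (a - b) + t * ((1/2) * scal C l * b)"
    if t: "0 < t" "t < 1" for t
  proof -
    obtain c where c: "c \<in> C" and three_point:
      "c \<bullet> (F xn - F z) + (1/2) * (1 - t) * (c \<bullet> \<mu>) * b \<le> (1/2) * (c \<bullet> l) * a"
      using surrogate_three_point[OF G xn t] unfolding a_def b_def by blast
    have b0: "0 \<le> (1 - t) * b"
      using t unfolding b_def by simp
    have "c \<bullet> l * ((1 - t) * b) \<le> c \<bullet> \<mu> * ((1 - t) * b)"
      using cle_inner[OF c l(2)] b0 by (rule mult_right_mono)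
    moreover have "c \<bullet> l * (a - (1 - t) * b) \<le> scal C l * (a - (1 - t) * b)"
      using scal_upper[OF c] ba mult_left_le_one_le[of b "1 - t"] t
      unfolding b_def by (intro mult_right_mono) auto
    ultimately have "c \<bullet> (F xn - F z) \<le> (1/2) * scal C l * (a - (1 - t) * b)"
      using three_point by (simp add: field_simps)
    then show ?thesis
      using m[OF c] by (simp add: field_simps)
  qed
  then have "m \<le> (1/2) * scal C l * (a - b)"
    by (rule le_if_le_add_small_multiples)
  then show ?thesis
    unfolding a_def b_def .
qed

end

locale surrogate_iteration = scalarized_cone K C
  for K C :: "'b::euclidean_space set" +
  fixes F :: "'a::euclidean_space \<Rightarrow> 'b" and l \<mu> :: 'b
    and x :: "nat \<Rightarrow> 'a" and G :: "nat \<Rightarrow> 'a \<Rightarrow> 'b"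
  assumes F_differentiable: "\<And>z. F differentiable at z"
    and l: "l \<in> K" and \<mu>: "\<mu> \<in> interior K" and l_le_\<mu>: "cle K l \<mu>"
    and surrogate: "\<And>k. G k \<in> surrogate K C l \<mu> F (x k)"
    and minimizer: "\<And>k. is_minimizer (\<lambda>z. scal C (G k z)) (x (Suc k))"
begin

lemma F_iterates_antimono: "i \<le> j \<Longrightarrow> cle K (F (x j)) (F (x i))"
proof (rule transitive_stepwise_le[where R = "\<lambda>i j. cle K (F (x j)) (F (x i))"])
  fix i j k
  assume "cle K (F (x j)) (F (x i))" "cle K (F (x k)) (F (x j))"
  then show "cle K (F (x k)) (F (x i))"
    by (rule cle_trans[rotated])
qed (use cle_refl surrogate_descent[OF surrogate minimizer] in auto)

lemma iterates_in_level_set: "x k \<in> level_set K F (x 0)"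
  using F_iterates_antimono[of 0 k] unfolding level_set_def by simp

lemma iterates_Fejer: "cle K (F z) (F (x (Suc k))) \<Longrightarrow> dist (x (Suc k)) z \<le> dist (x k) z"
  using surrogate_Fejer[OF surrogate minimizer \<mu> l_le_\<mu>] by (simp add: dist_norm norm_minus_commute)

lemma cluster_point_below_iterates:
  assumes r: "strict_mono r" and lim: "(x \<circ> r) \<longlonglongrightarrow> xs"
  shows "cle K (F xs) (F (x k))"
proof -
  have "isCont F xs"
    using F_differentiable differentiable_imp_continuous_within by blast
  from isCont_tendsto_compose[OF this lim[unfolded comp_def]]
  have "(\<lambda>j. F (x k) - F (x (r j))) \<longlonglongrightarrow> F (x k) - F xs"
    by (intro tendsto_intros)
  moreover have "\<forall>\<^sub>F j in sequentially. F (x k) - F (x (r j)) \<in> K"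
    using eventually_ge_at_top[of k]
  proof (rule eventually_mono)
    fix j assume "k \<le> j"
    with seq_suble[OF r, of j] show "F (x k) - F (x (r j)) \<in> K"
      using F_iterates_antimono[of k "r j"] unfolding cle_def by simp
  qed
  moreover have "closed K"
    using K unfolding pointed_cone_ok_def by simp
  ultimately show ?thesis
    unfolding cle_def by (intro Lim_in_closed_set) auto
qed

lemma iterates_convergent:
  assumes "bounded (level_set K F (x 0))"
  obtains xs where "x \<longlonglongrightarrow> xs"
proof -
  have "bounded (range x)"
    using assms iterates_in_level_set by (meson bounded_subset image_subsetI)
  then obtain xs r where r: "strict_mono r" and lim: "(x \<circ> r) \<longlonglongrightarrow> xs"
    using bounded_imp_convergent_subsequence by blast
  have below: "\<And>k. cle K (F xs) (F (x k))"
    using cluster_point_below_iterates[OF r lim] .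
  show thesis
    using Fejer_monotone_convergent[OF iterates_Fejer[OF below] r lim] by (rule that)
qed

lemma scal_surrogate_tendsto_zero:
  assumes lim: "x \<longlonglongrightarrow> xs"
  shows "(\<lambda>k. scal C (G k (x (Suc k)))) \<longlonglongrightarrow> 0"
proof -
  obtain c where c: "c \<in> C"
    using C_nonempty by blast
  have "isCont F xs"
    using F_differentiable differentiable_imp_continuous_within by blast
  from isCont_tendsto_compose[OF this LIMSEQ_Suc[OF lim]] isCont_tendsto_compose[OF this lim]
  have "(\<lambda>k. c \<bullet> (F (x (Suc k)) - F (x k))) \<longlonglongrightarrow> c \<bullet> (F xs - F xs)"
    by (intro tendsto_intros)
  then have lower_tendsto: "(\<lambda>k. c \<bullet> (F (x (Suc k)) - F (x k))) \<longlonglongrightarrow> 0"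
    by simp
  have lower: "c \<bullet> (F (x (Suc k)) - F (x k)) \<le> scal C (G k (x (Suc k)))" for k
  proof -
    have "cle K (F (x (Suc k)) - F (x k)) (G k (x (Suc k)))"
      using surrogate[of k] minimizer[of k] unfolding surrogate_def by blast
    from cle_inner[OF c this] scal_upper[OF c] show ?thesis
      by (rule order_trans)
  qed
  have upper: "scal C (G k (x (Suc k))) \<le> 0" for k
    using surrogate_value_nonpos[OF surrogate minimizer] .
  show ?thesis
    using lower upper by (intro tendsto_sandwich[OF _ _ lower_tendsto tendsto_const]) simp_all
qed

lemma gap_telescope:
  assumes z: "cle K (F z) (F (x k))" and m: "\<And>c. c \<in> C \<Longrightarrow> m \<le> c \<bullet> (F (x k) - F z)"
  shows "real k * m \<le> (1/2) * scal C l * (norm (z - x 0))\<^sup>2"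
proof -
  have step: "m \<le> (1/2) * scal C l * ((norm (z - x i))\<^sup>2 - (norm (z - x (Suc i)))\<^sup>2)"
    if i: "i < k" for i
  proof (rule surrogate_gap_bound[OF surrogate minimizer \<mu> l l_le_\<mu>])
    show "cle K (F z) (F (x (Suc i)))"
      using cle_trans[OF z F_iterates_antimono[of "Suc i" k]] i by simp
    fix c assume c: "c \<in> C"
    have "c \<bullet> F (x k) \<le> c \<bullet> F (x (Suc i))"
      using cle_inner[OF c F_iterates_antimono[of "Suc i" k]] i by simp
    then show "m \<le> c \<bullet> (F (x (Suc i)) - F z)"
      using m[OF c] by (simp add: inner_diff_right)
  qed
  have "real k * m = (\<Sum>i<k. m)"
    by simp
  also have "\<dots> \<le> (\<Sum>i<k. (1/2) * scal C l * ((norm (z - x i))\<^sup>2 - (norm (z - x (Suc i)))\<^sup>2))"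
    using step by (intro sum_mono) simp
  also have "\<dots> = (1/2) * scal C l * ((norm (z - x 0))\<^sup>2 - (norm (z - x k))\<^sup>2)"
    unfolding sum_distrib_left[symmetric] sum_lessThan_telescope'[of "\<lambda>i. (norm (z - x i))\<^sup>2"] ..
  also have "\<dots> \<le> (1/2) * scal C l * (norm (z - x 0))\<^sup>2"
    using scal_nonneg[OF l] by (simp add: mult_left_mono)
  finally show ?thesis .
qed

lemma u0_rate:
  assumes bounded: "bounded (level_set K F (x 0))" and k: "1 \<le> k"
  shows "u0 C F (x k) \<le> scal C l *
    (Sup {norm (y - z) | y z. y \<in> level_set K F (x 0) \<and> z \<in> level_set K F (x 0)})\<^sup>2 / (2 * real k)"
proof -
  let ?L = "level_set K F (x 0)"
  define R where "R = Sup {norm (y - z) | y z. y \<in> ?L \<and> z \<in> ?L}"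
  have R: "norm (y - z) \<le> R" if "y \<in> ?L" "z \<in> ?L" for y z
    unfolding R_def using norm_diff_le_Sup[OF bounded that] .
  show ?thesis
    unfolding u0_def R_def[symmetric]
  proof (rule cSUP_least)
    fix z
    define m where "m = (INF c\<in>C. c \<bullet> (F (x k) - F z))"
    have m: "m \<le> c \<bullet> (F (x k) - F z)" if "c \<in> C" for c
      unfolding m_def using that
      by (intro cINF_lower) (auto intro: bounded_imp_bdd_below bounded_inner_image)
    have "m \<le> scal C l * R\<^sup>2 / (2 * real k)"
    proof (cases "m \<le> 0")
      case True
      moreover have "0 \<le> scal C l * R\<^sup>2 / (2 * real k)"
        using scal_nonneg[OF l] by simp
      ultimately show ?thesis
        by linarith
    next
      case False
      then have zk: "cle K (F z) (F (x k))"
        unfolding cle_def mem_K_iff using m by force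
      have "z \<in> ?L"
        using cle_trans[OF zk F_iterates_antimono[of 0 k]] unfolding level_set_def by simp
      have "real k * m \<le> (1/2) * scal C l * (norm (z - x 0))\<^sup>2"
        using gap_telescope[OF zk m] .
      also have "\<dots> \<le> (1/2) * scal C l * R\<^sup>2"
        using R[OF \<open>z \<in> ?L\<close> iterates_in_level_set] scal_nonneg[OF l]
        by (intro mult_left_mono power_mono) auto
      finally show ?thesis
        using k by (simp add: field_simps)
    qed
    then show "(INF c\<in>C. c \<bullet> (F (x k) - F z)) \<le> scal C l * R\<^sup>2 / (2 * real k)"
      unfolding m_def .
  qed simp
qed

end

theorem theorem2:
  fixes K C :: "'b::euclidean_space set"
    and F :: "'a::euclidean_space \<Rightarrow> 'b"
    and l \<mu> :: 'b
    and x :: "nat \<Rightarrow> 'a"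
    and G :: "nat \<Rightarrow> 'a \<Rightarrow> 'b"
  assumes K: "pointed_cone_ok K"
    and C: "scal_set_ok K C"
    and F_diff: "\<forall>z. F differentiable at z"
    and F_conv: "K_convex K F"
    and l_in: "l \<in> K" and mu_in: "\<mu> \<in> interior K" and l_le_mu: "cle K l \<mu>"
    and A1: "bounded (level_set K F (x 0))"
    and A2: "\<And>r xs. strict_mono r \<Longrightarrow> (\<lambda>j. x (r j)) \<longlonglongrightarrow> xs \<Longrightarrow>
               (\<lambda>j. scal C (G (r j) (x (Suc (r j))))) \<longlonglongrightarrow> 0 \<Longrightarrow> K_stationary K F xs"
    and surr: "\<forall>k. G k \<in> surrogate K C l \<mu> F (x k)"
    and step: "\<forall>k. is_minimizer (\<lambda>z. scal C (G k z)) (x (Suc k))"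
    and nostop: "\<forall>k. x (Suc k) \<noteq> x k"
  shows "(\<exists>xs. x \<longlonglongrightarrow> xs \<and> weakly_efficient K F xs) \<and>
         (\<forall>k\<ge>1. u0 C F (x k) \<le>
            scal C l * (Sup {norm (y - z) | y z. y \<in> level_set K F (x 0) \<and> z \<in> level_set K F (x 0)})\<^sup>2
              / (2 * real k))"
proof -
  interpret surrogate_iteration K C F l \<mu> x G
    using assms by unfold_locales auto
  obtain xs where lim: "x \<longlonglongrightarrow> xs"
    using iterates_convergent[OF A1] by blast
  have "K_stationary K F xs"
    using A2[OF strict_mono_id] lim scal_surrogate_tendsto_zero[OF lim] by simp
  then have "weakly_efficient K F xs"
    by (rule K_stationary_imp_weakly_efficient[OF convex_cone_K F_conv])
  with lim u0_rate[OF A1] show ?thesis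
    by blast
qed

end
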